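(* For a locally compact metrizable topological group $G$, $G$ is NSS if and only if $G$ is TAP.
   Context: $e$ is the neutral element; $\prod_{k=1}^n a_k=a_1\cdots a_n$. $G$ is NSS if some neighborhood of $e$ contains no nontrivial subgroup of $G$. A sequence $(g_n)$ in $G$ is hyper-multipliable if for every integer sequence $(m_n)$ the sequence $\left(\prod_{k=1}^n g_k^{m_k}\right)_n$ converges in $G$. A subset $A\subset G$ is absolutely productive if every sequence of pairwise distinct elements of $A$ is hyper-multipliable. $G$ is TAP if every absolutely productive subset of $G$ is finite. *)

theory Defs
  imports "HOL-Analysis.Analysis"
begin

text \<open>Groups are written additively (class group_add, which is NOT assumed commutative):
  the group product a b is a + b, the neutral element e is 0, and g^m (m integer) is zpow m g.\<close>

definition npow :: "nat \<Rightarrow> 'a::monoid_add \<Rightarrow> 'a" where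
  "npow n g = (((+) g) ^^ n) 0"

definition zpow :: "int \<Rightarrow> 'a::group_add \<Rightarrow> 'a" where
  "zpow m g = (if 0 \<le> m then npow (nat m) g else - npow (nat (- m)) g)"

primrec oprod :: "(nat \<Rightarrow> 'a::monoid_add) \<Rightarrow> nat \<Rightarrow> 'a" where
  "oprod f 0 = 0"
| "oprod f (Suc n) = oprod f n + f n"

definition is_subgroup :: "'a::group_add set \<Rightarrow> bool" where
  "is_subgroup H \<longleftrightarrow> 0 \<in> H \<and> (\<forall>x\<in>H. \<forall>y\<in>H. x + y \<in> H) \<and> (\<forall>x\<in>H. - x \<in> H)"

definition NSS :: "'a::{topological_space, group_add} itself \<Rightarrow> bool" where
  "NSS _ \<longleftrightarrow> (\<exists>U::'a set. open U \<and> 0 \<in> U \<and>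
      (\<forall>H. is_subgroup H \<and> H \<subseteq> U \<longrightarrow> H = {0}))"

definition hyper_multipliable :: "(nat \<Rightarrow> 'a::{topological_space, group_add}) \<Rightarrow> bool" where
  "hyper_multipliable g \<longleftrightarrow>
     (\<forall>m :: nat \<Rightarrow> int. convergent (\<lambda>n. oprod (\<lambda>k. zpow (m k) (g k)) n))"

definition absolutely_productive :: "'a::{topological_space, group_add} set \<Rightarrow> bool" where
  "absolutely_productive A \<longleftrightarrow>
     (\<forall>g :: nat \<Rightarrow> 'a. inj g \<and> range g \<subseteq> A \<longrightarrow> hyper_multipliable g)"

definition TAP :: "'a::{topological_space, group_add} itself \<Rightarrow> bool" where
  "TAP _ \<longleftrightarrow> (\<forall>A::'a set. absolutely_productive A \<longrightarrow> finite A)"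

end

theory Submission
  imports Defs
begin

text \<open>
  NSS implies TAP: if U is a neighbourhood of 0 containing no nontrivial subgroup,
  every g \<noteq> 0 has a power outside U.  Given infinitely many distinct g_k, choose such
  powers; their ordered product cannot converge, since the factors of a convergent
  product tend to 0.

  TAP implies NSS: if G is not NSS, build a shrinking chain of neighbourhoods
  U_0 \<supseteq> U_1 \<supseteq> ... with U_{n+1} + U_{n+1} + U_{n+1} \<subseteq> U_n, -U_n + U_n small
  and U_0 inside a compact set, and pick h_n \<noteq> 0 in a subgroup inside U_n.  Then
  h_n \<rightarrow> 0, so the set of the h_n is infinite, and it is absolutely productive: the
  factors of a product of powers of distinct h's lie in U_{j(k)} for an injective j,
  so every tail block of the product lies in some U_M ("block lemma"); the partial
  products are therefore left Cauchy and, by compactness, converge.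
\<close>

subsection \<open>Integer powers and cyclic subgroups\<close>

lemma npow_0 [simp]: "npow 0 g = 0"
  by (simp add: npow_def)

lemma npow_Suc: "npow (Suc n) g = g + npow n g"
  by (simp add: npow_def)

text \<open>Powers of g commute with g, so the recursion may also be unfolded on the right.\<close>
lemma npow_Suc_right: "npow (Suc n) (g::'a::monoid_add) = npow n g + g"
proof (induction n)
  case 0
  show ?case by (simp add: npow_Suc)
next
  case (Suc n)
  have "npow (Suc (Suc n)) g = g + (npow n g + g)" by (simp only: npow_Suc[of "Suc n"] Suc.IH)
  also have "\<dots> = npow (Suc n) g + g" by (simp only: npow_Suc add.assoc)
  finally show ?case .
qed

lemma zpow_0: "zpow 0 g = 0"
  by (simp add: zpow_def)

lemma zpow_of_nat: "zpow (int n) g = npow n g"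
  by (simp add: zpow_def)

lemma zpow_neg_of_nat: "zpow (- int n) g = - npow n g"
  by (cases "n = 0") (simp_all add: zpow_def)

lemma zpow_succ: "zpow (m + 1) g = zpow m g + g"
proof (cases "0 \<le> m")
  case True
  then have "nat (m + 1) = Suc (nat m)" by simp
  then show ?thesis using True by (simp add: zpow_def npow_Suc_right)
next
  case False
  define n where "n = nat (- m - 1)"
  have m: "m = - int (Suc n)" and m1: "m + 1 = - int n" using False by (simp_all add: n_def)
  have "zpow m g + g = - npow n g + - g + g"
    by (simp only: m zpow_neg_of_nat npow_Suc minus_add)
  also have "\<dots> = zpow (m + 1) g" by (simp add: m1 zpow_neg_of_nat)
  finally show ?thesis ..
qed

lemma zpow_pred: "zpow (m - 1) g = zpow m g - g"
  using zpow_succ[of "m - 1" g] by (metis add_diff_cancel diff_add_cancel)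

lemma zpow_add: "zpow (a + b) g = zpow a g + zpow b g"
proof (induction b rule: int_induct[where k = 0])
  case base
  show ?case by (simp add: zpow_0)
next
  case (step1 i)
  then show ?case using zpow_succ[of "a + i" g] zpow_succ[of i g] by (simp add: add.assoc)
next
  case (step2 i)
  have "zpow (a + (i - 1)) g = zpow (a + i - 1) g" by (simp add: algebra_simps)
  also have "\<dots> = zpow a g + zpow i g - g" by (simp only: zpow_pred step2.IH)
  also have "\<dots> = zpow a g + zpow (i - 1) g" by (simp only: zpow_pred add_diff_eq)
  finally show ?case .
qed

lemma zpow_uminus: "zpow (- m) g = - zpow m g"
  using zpow_add[of m "- m" g] by (simp add: zpow_0 minus_unique)

lemma zpow_1: "zpow 1 g = g"
  using zpow_of_nat[of 1 g] by (simp add: npow_Suc)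

definition zmultiples :: "'a::group_add \<Rightarrow> 'a set" where
  "zmultiples g = range (\<lambda>m. zpow m g)"

lemma zmultiples_subgroup: "is_subgroup (zmultiples g)"
  unfolding is_subgroup_def
proof (intro conjI ballI)
  show "0 \<in> zmultiples g"
    unfolding zmultiples_def by (metis rangeI zpow_0)
next
  fix x y assume "x \<in> zmultiples g" "y \<in> zmultiples g"
  then obtain a b where "x = zpow a g" "y = zpow b g" unfolding zmultiples_def by blast
  then have "x + y = zpow (a + b) g" by (simp only: zpow_add)
  then show "x + y \<in> zmultiples g" unfolding zmultiples_def by blast
next
  fix x assume "x \<in> zmultiples g"
  then obtain a where "x = zpow a g" unfolding zmultiples_def by blast
  then have "- x = zpow (- a) g" by (simp only: zpow_uminus)
  then show "- x \<in> zmultiples g" unfolding zmultiples_def by blast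
qed

lemma generator_in_zmultiples: "g \<in> zmultiples g"
  unfolding zmultiples_def by (metis rangeI zpow_1)

lemma zpow_in_subgroup:
  assumes "is_subgroup H" "g \<in> H"
  shows "zpow m g \<in> H"
proof (induction m rule: int_induct[where k = 0])
  case base
  then show ?case using assms(1) by (simp add: zpow_0 is_subgroup_def)
next
  case (step1 i)
  then show ?case using assms by (simp add: zpow_succ is_subgroup_def)
next
  case (step2 i)
  then have "zpow i g + - g \<in> H" using assms by (simp add: is_subgroup_def del: add_uminus_conv_diff)
  then show ?case by (simp add: zpow_pred)
qed

subsection \<open>NSS implies TAP\<close>

text \<open>In a topological group the factors of a convergent ordered product tend to 0, being
  quotients of consecutive partial products.\<close>
lemma oprod_convergent_imp_factors_tendsto_0:
  fixes t :: "nat \<Rightarrow> 'a::topological_group_add"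
  assumes "convergent (oprod t)"
  shows "t \<longlonglongrightarrow> 0"
proof -
  obtain L where L: "oprod t \<longlonglongrightarrow> L"
    using assms unfolding convergent_def by blast
  have "(\<lambda>n. - oprod t n + oprod t (Suc n)) \<longlonglongrightarrow> - L + L"
    by (intro tendsto_add tendsto_minus L LIMSEQ_Suc)
  moreover have "- oprod t n + oprod t (Suc n) = t n" for n
    by (simp add: add.assoc[symmetric])
  ultimately show ?thesis by simp
qed

text \<open>If U contains no nontrivial subgroup, every g \<noteq> 0 has a power outside U, since
  otherwise the cyclic subgroup of g would lie in U.\<close>
lemma power_outside_nss_nbhd:
  assumes "\<And>H. is_subgroup H \<Longrightarrow> H \<subseteq> U \<Longrightarrow> H = {0}" and "g \<noteq> 0"
  shows "\<exists>m. zpow m g \<notin> U"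
proof -
  have "\<not> zmultiples g \<subseteq> U"
    using assms zmultiples_subgroup generator_in_zmultiples by blast
  then show ?thesis unfolding zmultiples_def by blast
qed

lemma nss_imp_tap:
  assumes "NSS TYPE('a::topological_group_add)"
  shows "TAP TYPE('a)"
  unfolding TAP_def
proof (intro allI impI)
  fix A :: "'a set"
  assume productive: "absolutely_productive A"
  obtain U :: "'a set" where U: "open U" "0 \<in> U" "\<And>H. is_subgroup H \<Longrightarrow> H \<subseteq> U \<Longrightarrow> H = {0}"
    using assms unfolding NSS_def by blast
  show "finite A"
  proof (rule ccontr)
    assume "infinite A"
    then obtain g :: "nat \<Rightarrow> 'a" where g: "inj g" "range g \<subseteq> A"
      using infinite_countable_subset by blast
    have "\<forall>k. \<exists>mk. g k \<noteq> 0 \<longrightarrow> zpow mk (g k) \<notin> U"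
      using power_outside_nss_nbhd[OF U(3)] by blast
    then obtain m where m: "\<And>k. g k \<noteq> 0 \<Longrightarrow> zpow (m k) (g k) \<notin> U"
      by metis
    have "convergent (oprod (\<lambda>k. zpow (m k) (g k)))"
      using productive g unfolding absolutely_productive_def hyper_multipliable_def by blast
    then have "eventually (\<lambda>k. zpow (m k) (g k) \<in> U) sequentially"
      using oprod_convergent_imp_factors_tendsto_0 U(1,2) topological_tendstoD by blast
    then obtain N where N: "\<And>k. N \<le> k \<Longrightarrow> zpow (m k) (g k) \<in> U"
      unfolding eventually_sequentially by blast
    have "g N \<noteq> 0 \<or> g (Suc N) \<noteq> 0"
      using injD[OF g(1), of N "Suc N"] by auto
    then show False using N[of N] N[of "Suc N"] m by auto
  qed
qed

subsection \<open>Products along a triple chain\<close>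

text \<open>A triple chain is a sequence of sets containing 0, each containing the threefold sums of
  the next one; this alone controls finite products with factors from distinct members.\<close>
definition triple_chain :: "(nat \<Rightarrow> 'a::monoid_add set) \<Rightarrow> bool" where
  "triple_chain U \<longleftrightarrow> (\<forall>n. 0 \<in> U n) \<and>
     (\<forall>n x y z. x \<in> U (Suc n) \<longrightarrow> y \<in> U (Suc n) \<longrightarrow> z \<in> U (Suc n) \<longrightarrow> x + y + z \<in> U n)"

lemma triple_chain_zero: "triple_chain U \<Longrightarrow> 0 \<in> U n"
  unfolding triple_chain_def by blast

lemma triple_chain_sum:
  assumes "triple_chain U" "x \<in> U (Suc n)" "y \<in> U (Suc n)" "z \<in> U (Suc n)"
  shows "x + y + z \<in> U n"
  using assms unfolding triple_chain_def by blast

text \<open>The members of a triple chain decrease, since x = x + 0 + 0.\<close>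
lemma triple_chain_antimono:
  assumes "triple_chain U" "m \<le> n"
  shows "U n \<subseteq> U m"
proof -
  have "U (Suc k) \<subseteq> U k" for k
  proof
    fix x assume "x \<in> U (Suc k)"
    then have "x + 0 + 0 \<in> U k"
      using assms(1) by (intro triple_chain_sum triple_chain_zero)
    then show "x \<in> U k" by simp
  qed
  then have "decseq U"
    by (rule decseq_SucI)
  then show ?thesis
    using assms(2) unfolding decseq_def by blast
qed

lemma oprod_append: "oprod f (a + n) = oprod f a + oprod (\<lambda>i. f (a + i)) n"
  by (induction n) (simp_all add: add.assoc)

text \<open>The factor with the least index
  m = j p splits the block into two shorter blocks with indices above m, so the product lies
  in U m + U m + U m \<subseteq> U (m - 1) \<subseteq> U M.\<close>
lemma triple_chain_block:
  fixes U :: "nat \<Rightarrow> 'a::monoid_add set"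
  assumes chain: "triple_chain U" and inj: "inj j" and t: "\<And>k. t k \<in> U (j k)"
    and "\<And>k. a \<le> k \<Longrightarrow> k < a + n \<Longrightarrow> M < j k"
  shows "oprod (\<lambda>i. t (a + i)) n \<in> U M"
  using assms(4)
proof (induction n arbitrary: a M rule: less_induct)
  case (less n)
  show ?case
  proof (cases "n = 0")
    case True
    then show ?thesis using chain by (simp add: triple_chain_zero)
  next
    case False
    define S where "S = {a..<a + n}"
    have "finite (j ` S)" "j ` S \<noteq> {}"
      using False by (auto simp: S_def)
    then obtain p where p: "p \<in> S" "j p = Min (j ` S)"
      by (metis Min_in imageE)
    define m where "m = j p"
    have above: "m < j k" if "k \<in> S" "k \<noteq> p" for k
    proof -
      have "m \<le> j k" using that(1) \<open>finite (j ` S)\<close> by (simp add: m_def p(2))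
      moreover have "j k \<noteq> j p" using inj that(2) by (auto dest: injD)
      ultimately show ?thesis by (simp add: m_def)
    qed
    define n1 where "n1 = p - a"
    define n2 where "n2 = n - Suc n1"
    have split: "p = a + n1" "n = n1 + Suc n2"
      using p(1) by (auto simp: S_def n1_def n2_def)
    have "oprod (\<lambda>i. t (a + i)) n
        = oprod (\<lambda>i. t (a + i)) n1 + t p + oprod (\<lambda>i. t (Suc p + i)) n2"
      unfolding split(2) oprod_append
      using oprod_append[of "\<lambda>i. t (p + i)" 1 n2] by (simp add: split(1) add.assoc)
    moreover have "oprod (\<lambda>i. t (a + i)) n1 \<in> U m"
      using less.IH[of n1 a m] above split by (simp add: S_def)
    moreover have "t p \<in> U m"
      using t by (simp add: m_def)
    moreover have "oprod (\<lambda>i. t (Suc p + i)) n2 \<in> U m"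
      using less.IH[of n2 "Suc p" m] above split by (simp add: S_def)
    moreover have "M < m"
      using less.prems p(1) by (simp add: S_def m_def)
    then obtain m' where m': "m = Suc m'" "M \<le> m'"
      by (cases m) auto
    ultimately have "oprod (\<lambda>i. t (a + i)) n \<in> U m'"
      using triple_chain_sum[OF chain] by simp
    then show ?thesis
      using triple_chain_antimono[OF chain m'(2)] by blast
  qed
qed

lemma inj_eventually_greater:
  fixes j :: "nat \<Rightarrow> nat"
  assumes "inj j"
  shows "eventually (\<lambda>k. M < j k) sequentially"
proof -
  have "finite (j -` {..M})"
    using assms by (intro finite_vimageI) auto
  then show ?thesis
    unfolding cofinite_eq_sequentially[symmetric] eventually_cofinite
    by (simp add: not_less vimage_def)
qed

lemma triple_chain_oprod_tail:
  fixes U :: "nat \<Rightarrow> 'a::group_add set"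
  assumes chain: "triple_chain U" and inj: "inj j" and t: "\<And>k. t k \<in> U (j k)"
  shows "\<exists>N. \<forall>n\<ge>N. - oprod t N + oprod t n \<in> U M"
proof -
  obtain N where N: "\<And>k. N \<le> k \<Longrightarrow> M < j k"
    using inj_eventually_greater[OF inj] unfolding eventually_sequentially by blast
  have "- oprod t N + oprod t n \<in> U M" if le: "N \<le> n" for n
  proof -
    obtain d where d: "n = N + d"
      using le_Suc_ex[OF le] by blast
    have "oprod (\<lambda>i. t (N + i)) d \<in> U M"
      using N by (intro triple_chain_block[OF chain inj t]) simp
    then show ?thesis
      by (simp add: d oprod_append add.assoc[symmetric])
  qed
  then show ?thesis by blast
qed

subsection \<open>Shrinking chains of neighbourhoods\<close>

lemma eventually_nhds_binop:
  fixes f :: "'a::topological_space \<Rightarrow> 'a \<Rightarrow> 'b::topological_space"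
  assumes "((\<lambda>p. f (fst p) (snd p)) \<longlongrightarrow> f a a) (nhds (a, a))"
    and "eventually P (nhds (f a a))"
  shows "\<exists>Q. eventually Q (nhds a) \<and> (\<forall>x y. Q x \<longrightarrow> Q y \<longrightarrow> P (f x y))"
proof -
  have "eventually (\<lambda>p. P (f (fst p) (snd p))) (nhds a \<times>\<^sub>F nhds a)"
    using assms unfolding filterlim_iff nhds_prod[symmetric] by blast
  then show ?thesis unfolding eventually_prod_same by auto
qed

lemma shrink_nbhd:
  fixes W :: "'a::{topological_group_add, metric_space} set"
  assumes "open W" "0 \<in> W" "r > 0"
  obtains V where "open V" "0 \<in> V" "V \<subseteq> W"
    "\<And>x y z. x \<in> V \<Longrightarrow> y \<in> V \<Longrightarrow> z \<in> V \<Longrightarrow> x + y + z \<in> W"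
    "\<And>x y. x \<in> V \<Longrightarrow> y \<in> V \<Longrightarrow> dist (- x + y) 0 < r"
proof -
  have add: "((\<lambda>p. fst p + snd p) \<longlongrightarrow> (0::'a) + 0) (nhds (0, 0))"
    using tendsto_add[OF tendsto_fst tendsto_snd, OF filterlim_ident filterlim_ident, of "(0, 0)"]
    by simp
  have diff: "((\<lambda>p. - fst p + snd p) \<longlongrightarrow> - (0::'a) + 0) (nhds (0, 0))"
    using tendsto_add[OF tendsto_minus tendsto_snd, OF tendsto_fst filterlim_ident,
        OF filterlim_ident, of "(0, 0)"]
    by simp
  have "eventually (\<lambda>x. x \<in> W) (nhds ((0::'a) + 0))"
    using assms(1,2) by (simp add: eventually_nhds_in_open)
  then obtain Q1 where Q1: "eventually Q1 (nhds (0::'a))" "\<And>x y. Q1 x \<Longrightarrow> Q1 y \<Longrightarrow> x + y \<in> W"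
    using eventually_nhds_binop[OF add] by blast
  have "eventually Q1 (nhds ((0::'a) + 0))"
    using Q1(1) by simp
  then obtain Q2 where Q2: "eventually Q2 (nhds (0::'a))" "\<And>x y. Q2 x \<Longrightarrow> Q2 y \<Longrightarrow> Q1 (x + y)"
    using eventually_nhds_binop[OF add] by blast
  have "eventually (\<lambda>x. dist x 0 < r) (nhds (- 0 + (0::'a)))"
    using assms(3) by (auto simp: eventually_nhds_metric)
  then obtain Q3 where Q3: "eventually Q3 (nhds (0::'a))" "\<And>x y. Q3 x \<Longrightarrow> Q3 y \<Longrightarrow> dist (- x + y) 0 < r"
    using eventually_nhds_binop[OF diff] by blast
  have "eventually (\<lambda>x. x \<in> W \<and> Q1 x \<and> Q2 x \<and> Q3 x) (nhds 0)"
    using assms(1,2) Q1(1) Q2(1) Q3(1) by (intro eventually_conj) (auto simp: eventually_nhds_in_open)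
  then obtain V where V: "open V" "0 \<in> V" "\<And>x. x \<in> V \<Longrightarrow> x \<in> W \<and> Q1 x \<and> Q2 x \<and> Q3 x"
    unfolding eventually_nhds by blast
  show thesis
  proof (rule that)
    show "x + y + z \<in> W" if "x \<in> V" "y \<in> V" "z \<in> V" for x y z
      using that V(3) Q1(2) Q2(2) by blast
  qed (use V Q3(2) in auto)
qed

definition shrinking_chain :: "(nat \<Rightarrow> 'a::{group_add, metric_space} set) \<Rightarrow> bool" where
  "shrinking_chain U \<longleftrightarrow> triple_chain U \<and> (\<forall>n. open (U n)) \<and>
     (\<forall>n x y. x \<in> U n \<longrightarrow> y \<in> U n \<longrightarrow> dist (- x + y) 0 < 1 / real (Suc n))"

lemma shrinking_chain_exists:
  fixes W :: "'a::{topological_group_add, metric_space} set"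
  assumes "open W" "0 \<in> W"
  obtains U where "shrinking_chain U" "U 0 \<subseteq> W"
proof -
  define P where "P n V \<longleftrightarrow> open V \<and> 0 \<in> V \<and> V \<subseteq> W \<and>
    (\<forall>x\<in>V. \<forall>y\<in>V. dist (- x + y) 0 < 1 / real (Suc n))" for n and V :: "'a set"
  have "\<exists>U. \<forall>n. P n (U n) \<and> (\<forall>x\<in>U (Suc n). \<forall>y\<in>U (Suc n). \<forall>z\<in>U (Suc n). x + y + z \<in> U n)"
  proof (rule dependent_nat_choice[where P = P
        and Q = "\<lambda>n V V'. \<forall>x\<in>V'. \<forall>y\<in>V'. \<forall>z\<in>V'. x + y + z \<in> V"])
    obtain V where "open V" "0 \<in> V" "V \<subseteq> W"
      "\<And>x y z. x \<in> V \<Longrightarrow> y \<in> V \<Longrightarrow> z \<in> V \<Longrightarrow> x + y + z \<in> W"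
      "\<And>x y. x \<in> V \<Longrightarrow> y \<in> V \<Longrightarrow> dist (- x + y) 0 < 1"
      using shrink_nbhd[OF assms zero_less_one] by blast
    then have "P 0 V" unfolding P_def by simp
    then show "\<exists>V. P 0 V" ..
  next
    fix V n
    assume V: "P n V"
    then have "open V" "0 \<in> V" "V \<subseteq> W" unfolding P_def by simp_all
    have r: "0 < 1 / real (Suc (Suc n))" by simp
    obtain V' where V': "open V'" "0 \<in> V'" "V' \<subseteq> V"
      "\<And>x y z. x \<in> V' \<Longrightarrow> y \<in> V' \<Longrightarrow> z \<in> V' \<Longrightarrow> x + y + z \<in> V"
      "\<And>x y. x \<in> V' \<Longrightarrow> y \<in> V' \<Longrightarrow> dist (- x + y) 0 < 1 / real (Suc (Suc n))"
      using shrink_nbhd[OF \<open>open V\<close> \<open>0 \<in> V\<close> r] by blast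
    have "P (Suc n) V'"
      unfolding P_def using V'(1,2,3,5) \<open>V \<subseteq> W\<close> by blast
    moreover have "\<forall>x\<in>V'. \<forall>y\<in>V'. \<forall>z\<in>V'. x + y + z \<in> V"
      using V'(4) by blast
    ultimately show "\<exists>V'. P (Suc n) V' \<and> (\<forall>x\<in>V'. \<forall>y\<in>V'. \<forall>z\<in>V'. x + y + z \<in> V)"
      by blast
  qed
  then obtain U where P: "\<And>n. P n (U n)"
    and triple: "\<And>n. \<forall>x\<in>U (Suc n). \<forall>y\<in>U (Suc n). \<forall>z\<in>U (Suc n). x + y + z \<in> U n"
    by blast
  have "triple_chain U"
    unfolding triple_chain_def using P triple unfolding P_def by blast
  moreover have "open (U n)" "\<forall>x\<in>U n. \<forall>y\<in>U n. dist (- x + y) 0 < 1 / real (Suc n)" for n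
    using P unfolding P_def by blast+
  ultimately have "shrinking_chain U"
    unfolding shrinking_chain_def by blast
  moreover have "U 0 \<subseteq> W"
    using P unfolding P_def by blast
  ultimately show thesis by (rule that)
qed

text \<open>Choosing one element from each member of a shrinking chain gives a null sequence,
  since h n = - 0 + h n lies within 1/(n+1) of 0.\<close>
lemma shrinking_chain_null:
  assumes "shrinking_chain U" "\<And>n. h n \<in> U n"
  shows "h \<longlonglongrightarrow> 0"
proof -
  have "dist (h n) 0 < 1 / real (Suc n)" for n
    using assms triple_chain_zero[of U n] unfolding shrinking_chain_def by fastforce
  then have "(\<lambda>n. dist (h n) 0) \<longlonglongrightarrow> 0"
    by (intro tendsto_sandwich[OF _ _ tendsto_const LIMSEQ_inverse_real_of_nat])
      (auto simp: less_imp_le inverse_eq_divide)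
  then show ?thesis
    by (rule tendsto_dist_iff[THEN iffD2])
qed

text \<open>A sequence in a compact set whose left differences - s m + s n become small converges:
  some subsequence converges to a point L, and - s m + L inherits the smallness.\<close>
lemma left_cauchy_compact_convergent:
  fixes s :: "nat \<Rightarrow> 'a::{topological_group_add, metric_space}"
  assumes "compact C" "\<And>n. s n \<in> C"
    and cauchy: "\<And>e. e > 0 \<Longrightarrow> \<exists>N. \<forall>m\<ge>N. \<forall>n\<ge>N. dist (- s m + s n) 0 < e"
  shows "convergent s"
proof -
  obtain L r where r: "strict_mono r" "(s \<circ> r) \<longlonglongrightarrow> L"
    using assms(1,2) unfolding compact_eq_seq_compact_metric seq_compact_def by metis
  have "(\<lambda>m. - s m + L) \<longlonglongrightarrow> 0"
    unfolding lim_sequentially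
  proof (intro allI impI)
    fix e :: real
    assume "e > 0"
    then obtain N where N: "\<And>m n. N \<le> m \<Longrightarrow> N \<le> n \<Longrightarrow> dist (- s m + s n) 0 < e / 2"
      using cauchy[of "e / 2"] by auto
    have bound: "dist (- s m + L) 0 \<le> e / 2" if "N \<le> m" for m
    proof (rule tendsto_upperbound)
      show "(\<lambda>i. dist (- s m + s (r i)) 0) \<longlonglongrightarrow> dist (- s m + L) 0"
        using r(2) unfolding o_def by (intro tendsto_intros)
      show "eventually (\<lambda>i. dist (- s m + s (r i)) 0 \<le> e / 2) sequentially"
        using eventually_ge_at_top[of N]
      proof eventually_elim
        case (elim i)
        then have "N \<le> r i" using seq_suble[OF r(1), of i] by linarith
        then show ?case using N[OF that] by (simp add: less_imp_le)
      qed
    qed simp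
    have "dist (- s m + L) 0 < e" if "N \<le> m" for m
      using bound[OF that] \<open>e > 0\<close> by linarith
    then show "\<exists>N. \<forall>m\<ge>N. dist (- s m + L) 0 < e"
      by blast
  qed
  then have "(\<lambda>m. L + - (- s m + L)) \<longlonglongrightarrow> L + - 0"
    by (intro tendsto_intros)
  moreover have "L + - (- s m + L) = s m" for m
    by (simp only: minus_add minus_minus add.assoc add_minus_cancel)
  ultimately have "s \<longlonglongrightarrow> L"
    by simp
  then show ?thesis
    by (rule convergentI)
qed

text \<open>Products of factors t k \<in> U (j k), taken from a shrinking chain whose first member lies in
  a compact set, converge for injective j: every tail of partial products stays in a translate
  of some U M, which makes them left Cauchy and confines them to a compact set.\<close>
lemma shrinking_chain_oprod_convergent:
  fixes U :: "nat \<Rightarrow> 'a::{topological_group_add, metric_space} set"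
  assumes chain: "shrinking_chain U" and "compact K" "U 0 \<subseteq> K"
    and inj: "inj j" and t: "\<And>k. t k \<in> U (j k)"
  shows "convergent (oprod t)"
proof -
  have triple: "triple_chain U"
    and small: "\<And>n x y. x \<in> U n \<Longrightarrow> y \<in> U n \<Longrightarrow> dist (- x + y) 0 < 1 / real (Suc n)"
    using chain unfolding shrinking_chain_def by blast+
  obtain NN where tail: "\<And>M n. NN M \<le> n \<Longrightarrow> - oprod t (NN M) + oprod t n \<in> U M"
    using triple_chain_oprod_tail[OF triple inj t] by metis
  define N0 where "N0 = NN 0"
  define s where "s i = oprod t (N0 + i)" for i
  have "convergent s"
  proof (rule left_cauchy_compact_convergent)
    show "compact ((+) (oprod t N0) ` K)"
      using \<open>compact K\<close> by (intro compact_continuous_image continuous_intros)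
    show "s n \<in> (+) (oprod t N0) ` K" for n
    proof
      show "s n = oprod t N0 + (- oprod t N0 + s n)"
        by (simp add: add.assoc[symmetric])
      show "- oprod t N0 + s n \<in> K"
        using tail[of 0 "N0 + n"] \<open>U 0 \<subseteq> K\<close> by (auto simp: s_def N0_def)
    qed
    fix e :: real
    assume "e > 0"
    then obtain M where M: "1 / real (Suc M) < e"
      by (rule nat_approx_posE)
    have "dist (- s m + s n) 0 < e" if "NN M \<le> m" "NN M \<le> n" for m n
    proof -
      let ?u = "- oprod t (NN M) + s m" and ?v = "- oprod t (NN M) + s n"
      have "?u \<in> U M" "?v \<in> U M"
        using tail that by (simp_all add: s_def)
      moreover have "- s m + s n = - ?u + ?v"
        by (simp only: minus_add minus_minus add.assoc add_minus_cancel)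
      ultimately show ?thesis
        using small M by (metis less_trans)
    qed
    then show "\<exists>N. \<forall>m\<ge>N. \<forall>n\<ge>N. dist (- s m + s n) 0 < e"
      by blast
  qed
  then obtain L where "(\<lambda>i. oprod t (i + N0)) \<longlonglongrightarrow> L"
    unfolding convergent_def s_def by (auto simp: add.commute)
  then show ?thesis
    using LIMSEQ_offset convergentI by blast
qed

subsection \<open>TAP implies NSS\<close>

text \<open>A sequence of nonzero elements converging to 0 takes infinitely many values: a finite
  set of values avoiding 0 is closed, so its complement would be a neighbourhood of 0 that
  the sequence eventually enters.\<close>
lemma nonzero_null_sequence_infinite_range:
  fixes h :: "nat \<Rightarrow> 'a::{t1_space, zero}"
  assumes "h \<longlonglongrightarrow> 0" "\<And>n. h n \<noteq> 0"
  shows "infinite (range h)"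
proof
  assume "finite (range h)"
  then have "open (- range h)"
    by (simp add: finite_imp_closed open_Compl)
  moreover have "0 \<in> - range h"
    using assms(2) by (metis ComplI rangeE)
  ultimately have "eventually (\<lambda>n. h n \<in> - range h) sequentially"
    by (rule topological_tendstoD[OF assms(1)])
  then show False
    by simp
qed

lemma not_nss_nontrivial_subgroup:
  assumes "\<not> NSS TYPE('a::{topological_space, group_add})" "open W" "0 \<in> W"
  shows "\<exists>H (x::'a). is_subgroup H \<and> H \<subseteq> W \<and> x \<in> H \<and> x \<noteq> 0"
proof -
  obtain H where "is_subgroup H" "H \<subseteq> W" "H \<noteq> {0}"
    using assms unfolding NSS_def by blast
  moreover have "0 \<in> H"
    using \<open>is_subgroup H\<close> by (simp add: is_subgroup_def)
  ultimately show ?thesis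
    by blast
qed

text \<open>Elements h n taken from subgroups H n inside the members of a shrinking chain whose first
  member lies in a compact set form an absolutely productive set: a product of powers of distinct h's has
  its k-th factor in H (j k) \<subseteq> U (j k) for an injective j.\<close>
lemma shrinking_chain_absolutely_productive:
  fixes U :: "nat \<Rightarrow> 'a::{topological_group_add, metric_space} set"
  assumes chain: "shrinking_chain U" and "compact K" "U 0 \<subseteq> K"
    and H: "\<And>n. is_subgroup (H n)" "\<And>n. H n \<subseteq> U n" and h: "\<And>n. h n \<in> H n"
  shows "absolutely_productive (range h)"
  unfolding absolutely_productive_def hyper_multipliable_def
proof (intro allI impI)
  fix g :: "nat \<Rightarrow> 'a" and m :: "nat \<Rightarrow> int"
  assume g: "inj g \<and> range g \<subseteq> range h"
  define j where "j k = inv h (g k)" for k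
  have hj: "h (j k) = g k" for k
  proof -
    have "g k \<in> range h" using g by blast
    then show ?thesis unfolding j_def by (rule f_inv_into_f)
  qed
  have "inj j"
    using g by (metis hj injD injI)
  moreover have "zpow (m k) (g k) \<in> U (j k)" for k
    using zpow_in_subgroup[OF H(1)[of "j k"] h[of "j k"], of "m k"] H(2)[of "j k"] hj[of k] by auto
  ultimately show "convergent (oprod (\<lambda>k. zpow (m k) (g k)))"
    by (rule shrinking_chain_oprod_convergent[OF chain \<open>compact K\<close> \<open>U 0 \<subseteq> K\<close>])
qed

lemma tap_imp_nss:
  assumes lc: "locally_compact_space (euclidean :: 'a::{topological_group_add, metric_space} topology)"
    and tap: "TAP TYPE('a)"
  shows "NSS TYPE('a)"
proof (rule ccontr)
  assume not_nss: "\<not> NSS TYPE('a)"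
  have "\<forall>x::'a. \<exists>V. open V \<and> (\<exists>K. compact K \<and> x \<in> V \<and> V \<subseteq> K)"
    using lc unfolding locally_compact_space_def by simp
  then obtain V K :: "'a set" where VK: "open V" "compact K" "0 \<in> V" "V \<subseteq> K"
    by blast
  obtain U where chain: "shrinking_chain U" and "U 0 \<subseteq> V"
    using shrinking_chain_exists[OF VK(1,3)] by blast
  with VK(4) have "U 0 \<subseteq> K"
    by blast
  have "\<exists>H x. is_subgroup H \<and> H \<subseteq> U n \<and> x \<in> H \<and> x \<noteq> 0" for n
  proof -
    have "open (U n)" "0 \<in> U n"
      using chain triple_chain_zero unfolding shrinking_chain_def by blast+
    then show ?thesis
      by (rule not_nss_nontrivial_subgroup[OF not_nss])
  qed
  then obtain H h where H: "\<And>n. is_subgroup (H n)" "\<And>n. H n \<subseteq> U n"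
    and h: "\<And>n. h n \<in> H n" "\<And>n. h n \<noteq> 0"
    by metis
  have "absolutely_productive (range h)"
    using shrinking_chain_absolutely_productive[OF chain VK(2) \<open>U 0 \<subseteq> K\<close> H h(1)] .
  moreover have "infinite (range h)"
    using shrinking_chain_null[OF chain] H(2) h by (intro nonzero_null_sequence_infinite_range) blast+
  ultimately show False
    using tap unfolding TAP_def by blast
qed

theorem corollary5p6:
  assumes "locally_compact_space (euclidean :: 'a::{topological_group_add, metric_space} topology)"
  shows "NSS TYPE('a) \<longleftrightarrow> TAP TYPE('a)"
  using nss_imp_tap tap_imp_nss[OF assms] by blast

end
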